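(* There is a bijection $F : C_{n+1} \to S_n$ such that for each $\pi \in C_{n+1}$ and each $\ell \in [n]$, $\mathrm{Exc}(\pi) = \{1,\dots,\ell\}$ if and only if $\mathrm{DesBot}(F(\pi)) = \{1,\dots,\ell-1\}$.
   Context: $C_{n+1}$ is the set of $(n+1)$-cycles, i.e. permutations of $[n+1]$ consisting of a single cycle of length $n+1$. For $\pi \in S_{n+1}$, $\mathrm{Exc}(\pi) = \{i \in [n] : \pi(i) > i\}$. For $p \in S_n$, the descent bottoms set is $\mathrm{DesBot}(p) = \{p(i) : 2\le i\le n,\ p(i) < p(i-1)\}$. *)

theory Defs
  imports "HOL-Combinatorics.Combinatorics"
begin

definition perms :: "nat \<Rightarrow> (nat \<Rightarrow> nat) set" where
  "perms m = {p. p permutes {1..m}}"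

definition cycles :: "nat \<Rightarrow> (nat \<Rightarrow> nat) set" where
  "cycles m = {p. p permutes {1..m} \<and> {(p ^^ k) 1 | k. True} = {1..m}}"

definition Exc :: "nat \<Rightarrow> (nat \<Rightarrow> nat) \<Rightarrow> nat set" where
  "Exc n \<pi> = {i \<in> {1..n}. \<pi> i > i}"

definition DesBot :: "nat \<Rightarrow> (nat \<Rightarrow> nat) \<Rightarrow> nat set" where
  "DesBot n p = {p i | i. 2 \<le> i \<and> i \<le> n \<and> p i < p (i - 1)}"

end

theory Submission
  imports Defs
begin

text \<open>Reading the cycle of \<open>\<pi> \<in> C\<^sub>n\<^sub>+\<^sub>1\<close> backwards from 1 and lowering every letter by one
gives the word \<open>F \<pi> = (\<pi>\<^sup>n(1) - 1, \<pi>\<^sup>n\<^sup>-\<^sup>1(1) - 1, \<dots>, \<pi>(1) - 1)\<close> in \<open>S\<^sub>n\<close>, and every word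
arises from exactly one cycle. Two adjacent letters \<open>x - 1, \<pi>(x) - 1\<close> of this word
form a descent with bottom \<open>x - 1\<close> exactly when \<open>x < \<pi>(x)\<close>, and \<open>1\<close> is always an
excedance. Hence \<open>Exc(\<pi>) = {1} \<union> (DesBot(F \<pi>) + 1)\<close>, from which the claimed
correspondence of initial segments is immediate.\<close>

lemma cycles_funpow_1_in:
  assumes "\<pi> \<in> cycles m"
  shows "(\<pi> ^^ k) 1 \<in> {1..m}"
  using assms by (auto simp: cycles_def)

lemma cycles_orbit:
  assumes "\<pi> \<in> cycles m"
  shows "orbit \<pi> 1 = {1..m}"
proof -
  have "permutation \<pi>"
    using assms by (auto simp: cycles_def permutation_permutes)
  then show ?thesis
    using assms by (simp add: orbit_altdef_permutation cycles_def)
qed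

lemma cycles_1_in_orbit:
  assumes "\<pi> \<in> cycles m"
  shows "1 \<in> orbit \<pi> 1"
  using cycles_orbit[OF assms] cycles_funpow_1_in[OF assms, of 0] by simp

lemma cycles_funpow_dist1:
  assumes "\<pi> \<in> cycles m"
  shows "funpow_dist1 \<pi> 1 1 = m"
proof -
  note self = cycles_1_in_orbit[OF assms]
  have "m = card (orbit \<pi> 1)"
    using cycles_orbit[OF assms] by simp
  also have "\<dots> = card ((\<lambda>k. (\<pi> ^^ k) 1) ` {0..<funpow_dist1 \<pi> 1 1})"
    by (simp only: orbit_conv_funpow_dist1[OF self])
  also have "\<dots> = funpow_dist1 \<pi> 1 1"
    using card_image[OF inj_on_funpow_dist1[OF self]] by simp
  finally show ?thesis ..
qed

lemma cycles_funpow_period: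
  assumes "\<pi> \<in> cycles m"
  shows "(\<pi> ^^ m) 1 = 1"
  using funpow_dist1_prop[OF cycles_1_in_orbit[OF assms]] by (simp only: cycles_funpow_dist1[OF assms])

lemma cycles_funpow_bij:
  assumes "\<pi> \<in> cycles m"
  shows "bij_betw (\<lambda>k. (\<pi> ^^ k) 1) {..<m} {1..m}"
  using inj_on_funpow_dist1[OF cycles_1_in_orbit[OF assms]]
    orbit_conv_funpow_dist1[OF cycles_1_in_orbit[OF assms]]
    cycles_orbit[OF assms] cycles_funpow_dist1[OF assms]
  by (simp add: bij_betw_def atLeast0LessThan)

lemma cycles_funpow_neq_1:
  assumes "\<pi> \<in> cycles m" "0 < k" "k < m"
  shows "(\<pi> ^^ k) 1 \<noteq> 1"
  using inj_onD[OF bij_betw_imp_inj_on[OF cycles_funpow_bij[OF assms(1)]], of k 0] assms(2,3)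
  by auto

lemma cycles_eqI:
  assumes \<pi>: "\<pi> \<in> cycles m" and \<sigma>: "\<sigma> \<in> cycles m"
    and agree: "\<And>k. k < m \<Longrightarrow> (\<pi> ^^ k) 1 = (\<sigma> ^^ k) 1"
  shows "\<pi> = \<sigma>"
proof
  fix x
  show "\<pi> x = \<sigma> x"
  proof (cases "x \<in> {1..m}")
    case True
    then obtain k where k: "k < m" "x = (\<pi> ^^ k) 1"
      using bij_betw_imp_surj_on[OF cycles_funpow_bij[OF \<pi>]] by force
    have "(\<pi> ^^ Suc k) 1 = (\<sigma> ^^ Suc k) 1"
      using agree[of "Suc k"] cycles_funpow_period[OF \<pi>] cycles_funpow_period[OF \<sigma>] k(1)
      by (cases "Suc k = m") auto
    then show ?thesis
      using k agree[of k] by simp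
  next
    case False
    have "\<pi> permutes {1..m}" "\<sigma> permutes {1..m}"
      using \<pi> \<sigma> by (simp_all add: cycles_def)
    then show ?thesis
      using permutes_not_in False by metis
  qed
qed

lemma funpow_cycle_of_list_hd:
  assumes "distinct cs" "cs \<noteq> []"
  shows "(cycle_of_list cs ^^ k) (hd cs) = cs ! (k mod length cs)"
proof -
  have "map (cycle_of_list cs ^^ k) cs ! 0 = rotate k cs ! 0"
    by (simp only: cyclic_rotation[OF assms(1)])
  then show ?thesis
    using assms(2) by (simp add: hd_conv_nth nth_rotate)
qed

lemma cycle_of_list_in_cycles:
  assumes "distinct cs" "cs \<noteq> []" "set cs = {1..m}" "hd cs = 1"
  shows "cycle_of_list cs \<in> cycles m"
proof -
  have len: "length cs = m"
    using distinct_card[OF assms(1)] assms(3) by simp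
  have "{(cycle_of_list cs ^^ k) 1 | k. True} = {cs ! (k mod m) | k. True}"
    using funpow_cycle_of_list_hd[OF assms(1,2)] assms(4) len by metis
  also have "\<dots> = set cs"
  proof (intro set_eqI iffI)
    fix x
    assume "x \<in> {cs ! (k mod m) | k. True}"
    then show "x \<in> set cs"
      using len assms(2) by auto
  next
    fix x
    assume "x \<in> set cs"
    then obtain k where "k < m" "x = cs ! k"
      using len by (auto simp: in_set_conv_nth)
    then show "x \<in> {cs ! (k mod m) | k. True}"
      by (metis (mono_tags, lifting) mem_Collect_eq mod_less)
  qed
  finally show ?thesis
    using cycle_permutes[of cs] assms(3) by (simp add: cycles_def)
qed

definition cycle_word :: "nat \<Rightarrow> (nat \<Rightarrow> nat) \<Rightarrow> nat \<Rightarrow> nat" where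
  "cycle_word n \<pi> i = (if i \<in> {1..n} then (\<pi> ^^ (n + 1 - i)) 1 - 1 else i)"

lemma cycle_word_outside: "i \<notin> {1..n} \<Longrightarrow> cycle_word n \<pi> i = i"
  by (auto simp: cycle_word_def)

lemma cycle_word_apply: "i \<in> {1..n} \<Longrightarrow> cycle_word n \<pi> i = (\<pi> ^^ (n + 1 - i)) 1 - 1"
  by (simp add: cycle_word_def)

lemma cycle_word_reindex:
  assumes "0 < k" "k \<le> n"
  shows "cycle_word n \<pi> (n + 1 - k) = (\<pi> ^^ k) 1 - 1"
proof -
  have "n + 1 - k \<in> {1..n}" "n + 1 - (n + 1 - k) = k"
    using assms by auto
  then show ?thesis
    by (simp add: cycle_word_apply)
qed

lemma cycle_word_permutes:
  assumes "\<pi> \<in> cycles (n + 1)"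
  shows "cycle_word n \<pi> permutes {1..n}"
proof (rule bij_imp_permutes)
  have reverse: "bij_betw (\<lambda>i. n + 1 - i) {1..n} {1..n}"
    by (rule bij_betw_byWitness[where f' = "\<lambda>i. n + 1 - i"]) auto
  have "bij_betw (\<lambda>k. (\<pi> ^^ k) 1) ({..<n + 1} - {0}) ({1..n + 1} - {1})"
    by (rule bij_betw_DiffI[OF cycles_funpow_bij[OF assms]]) auto
  moreover have "{..<n + 1} - {0} = {1..n}" "{1..n + 1} - {1} = {2..n + 1}"
    by auto
  ultimately have orbit: "bij_betw (\<lambda>k. (\<pi> ^^ k) 1) {1..n} {2..n + 1}"
    by simp
  have lower: "bij_betw (\<lambda>x. x - 1) {2..n + 1} {1..n}"
    by (rule bij_betw_byWitness[where f' = Suc]) auto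
  have "bij_betw ((\<lambda>x. x - 1) \<circ> ((\<lambda>k. (\<pi> ^^ k) 1) \<circ> (\<lambda>i. n + 1 - i))) {1..n} {1..n}"
    by (rule bij_betw_trans[OF bij_betw_trans[OF reverse orbit] lower])
  then show "bij_betw (cycle_word n \<pi>) {1..n} {1..n}"
    by (rule bij_betw_cong[THEN iffD1, rotated]) (simp add: cycle_word_def)
qed (rule cycle_word_outside)

lemma cycle_word_inj: "inj_on (cycle_word n) (cycles (n + 1))"
proof (rule inj_onI)
  fix \<pi> \<sigma>
  assume \<pi>: "\<pi> \<in> cycles (n + 1)" and \<sigma>: "\<sigma> \<in> cycles (n + 1)"
    and eq: "cycle_word n \<pi> = cycle_word n \<sigma>"
  show "\<pi> = \<sigma>"
  proof (rule cycles_eqI[OF \<pi> \<sigma>])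
    fix k
    assume "k < n + 1"
    show "(\<pi> ^^ k) 1 = (\<sigma> ^^ k) 1"
    proof (cases "k = 0")
      case False
      then have k: "0 < k" "k \<le> n"
        using \<open>k < n + 1\<close> by auto
      have "(\<pi> ^^ k) 1 - 1 = (\<sigma> ^^ k) 1 - 1"
        using cycle_word_reindex[OF k, of \<pi>] cycle_word_reindex[OF k, of \<sigma>] eq by simp
      then show ?thesis
        using cycles_funpow_1_in[OF \<pi>, of k] cycles_funpow_1_in[OF \<sigma>, of k] by (simp; linarith)
    qed simp
  qed
qed

lemma cycle_word_surj:
  assumes p: "p permutes {1..n}"
  shows "\<exists>\<pi> \<in> cycles (n + 1). cycle_word n \<pi> = p"
proof -
  define cs where "cs = 1 # map (\<lambda>i. p i + 1) (rev [1..<n + 1])"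
  have nth: "cs ! k = p (n + 1 - k) + 1" if "1 \<le> k" "k \<le> n" for k
    using that by (cases k) (simp_all add: cs_def rev_nth Suc_diff_Suc del: upt_Suc)
  have p_range: "p i \<in> {1..n}" if "i \<in> {1..n}" for i
    using permutes_in_image[OF p] that by blast
  have "1 \<notin> (\<lambda>i. p i + 1) ` {1..n}" "inj_on (\<lambda>i. p i + 1) {1..n}"
    using p_range permutes_inj_on[OF p] by (force, auto simp: inj_on_def)
  then have "distinct cs"
    by (simp add: cs_def distinct_map atLeastLessThanSuc_atLeastAtMost del: upt_Suc)
  moreover have "set cs = {1..n + 1}"
  proof -
    have "(\<lambda>i. p i + 1) ` {1..n} = Suc ` p ` {1..n}"
      by (auto simp: image_image)
    also have "\<dots> = {2..n + 1}"
      using permutes_image[OF p] by simp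
    finally show ?thesis
      by (auto simp: cs_def atLeastLessThanSuc_atLeastAtMost simp del: upt_Suc)
  qed
  ultimately have \<pi>: "cycle_of_list cs \<in> cycles (n + 1)"
    by (intro cycle_of_list_in_cycles) (simp_all add: cs_def)
  have "cycle_word n (cycle_of_list cs) = p"
  proof
    fix i
    show "cycle_word n (cycle_of_list cs) i = p i"
    proof (cases "i \<in> {1..n}")
      case True
      then have "(cycle_of_list cs ^^ (n + 1 - i)) 1 = cs ! (n + 1 - i)"
        using funpow_cycle_of_list_hd[OF \<open>distinct cs\<close>, of "n + 1 - i"]
        by (simp add: cs_def)
      also have "\<dots> = p i + 1"
        using nth[of "n + 1 - i"] True by auto
      finally show ?thesis
        using True by (simp add: cycle_word_apply)
    next
      case False
      then show ?thesis
        using permutes_not_in[OF p False] cycle_word_outside[OF False] by simp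
    qed
  qed
  with \<pi> show ?thesis
    by blast
qed

lemma cycle_word_bij: "bij_betw (cycle_word n) (cycles (n + 1)) (perms n)"
proof -
  have "cycle_word n ` cycles (n + 1) = perms n"
  proof
    show "cycle_word n ` cycles (n + 1) \<subseteq> perms n"
      using cycle_word_permutes by (auto simp: perms_def)
    show "perms n \<subseteq> cycle_word n ` cycles (n + 1)"
      using cycle_word_surj by (auto simp: perms_def image_iff)
  qed
  with cycle_word_inj show ?thesis
    by (simp add: bij_betw_def)
qed

lemma cycle_word_descent_iff:
  assumes \<pi>: "\<pi> \<in> cycles (n + 1)" and i: "2 \<le> i" "i \<le> n"
  shows "cycle_word n \<pi> i < cycle_word n \<pi> (i - 1)
    \<longleftrightarrow> (\<pi> ^^ (n + 1 - i)) 1 < \<pi> ((\<pi> ^^ (n + 1 - i)) 1)"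
proof -
  let ?x = "(\<pi> ^^ (n + 1 - i)) 1"
  have previous: "i - 1 \<in> {1..n}" "n + 1 - (i - 1) = Suc (n + 1 - i)"
    using i by auto
  have "cycle_word n \<pi> i = ?x - 1"
    using i by (simp add: cycle_word_apply)
  moreover have "cycle_word n \<pi> (i - 1) = \<pi> ?x - 1"
    using previous by (simp only: cycle_word_apply funpow.simps comp_apply)
  moreover have "1 \<le> ?x" "1 \<le> \<pi> ?x"
    using cycles_funpow_1_in[OF \<pi>, of "n + 1 - i"] cycles_funpow_1_in[OF \<pi>, of "Suc (n + 1 - i)"]
    by auto
  ultimately show ?thesis
    by (simp add: less_diff_iff)
qed

lemma Exc_minus_1_in_DesBot:
  assumes \<pi>: "\<pi> \<in> cycles (n + 1)" and "x \<in> Exc n \<pi>" "x \<noteq> 1"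
  shows "x - 1 \<in> DesBot n (cycle_word n \<pi>)"
proof -
  have x: "x \<in> {1..n}" "x < \<pi> x"
    using assms(2) by (auto simp: Exc_def)
  obtain k where k: "k < n + 1" "x = (\<pi> ^^ k) 1"
    using bij_betw_imp_surj_on[OF cycles_funpow_bij[OF \<pi>]] x(1) by force
  have "k \<noteq> 0"
    using assms(3) k(2) by (cases k) auto
  moreover have "k \<noteq> n"
    using x k(2) cycles_funpow_period[OF \<pi>] by auto
  ultimately have i: "2 \<le> n + 1 - k" "n + 1 - k \<le> n" "n + 1 - (n + 1 - k) = k"
    using k(1) by auto
  have "cycle_word n \<pi> (n + 1 - k) = x - 1"
    using i k(2) by (simp add: cycle_word_apply)
  moreover have "cycle_word n \<pi> (n + 1 - k) < cycle_word n \<pi> (n + 1 - k - 1)"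
    using cycle_word_descent_iff[OF \<pi> i(1,2)] i(3) k(2) x(2) by simp
  ultimately show ?thesis
    unfolding DesBot_def using i(1,2) by force
qed

lemma Suc_DesBot_in_Exc:
  assumes \<pi>: "\<pi> \<in> cycles (n + 1)" and "y \<in> DesBot n (cycle_word n \<pi>)"
  shows "Suc y \<in> Exc n \<pi>"
proof -
  obtain i where i: "2 \<le> i" "i \<le> n" "y = cycle_word n \<pi> i"
    and descent: "cycle_word n \<pi> i < cycle_word n \<pi> (i - 1)"
    using assms(2) unfolding DesBot_def by blast
  have "Suc y = (\<pi> ^^ (n + 1 - i)) 1"
    using i cycles_funpow_1_in[OF \<pi>, of "n + 1 - i"] by (simp add: cycle_word_apply)
  moreover have "Suc y < \<pi> (Suc y)"
    using cycle_word_descent_iff[OF \<pi> i(1,2)] descent calculation by simp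
  moreover have "\<pi> (Suc y) \<le> n + 1"
    using cycles_funpow_1_in[OF \<pi>, of "Suc (n + 1 - i)"] calculation(1) by simp
  ultimately show ?thesis
    by (simp add: Exc_def)
qed

lemma cycles_1_in_Exc:
  assumes "\<pi> \<in> cycles (n + 1)" "1 \<le> n"
  shows "1 \<in> Exc n \<pi>"
  using cycles_funpow_1_in[OF assms(1), of 1] cycles_funpow_neq_1[OF assms(1), of 1] assms(2)
  by (auto simp: Exc_def)

lemma Exc_eq_insert_1_Suc_DesBot:
  assumes "\<pi> \<in> cycles (n + 1)" "1 \<le> n"
  shows "Exc n \<pi> = insert 1 (Suc ` DesBot n (cycle_word n \<pi>))"
proof (intro equalityI subsetI)
  fix x
  assume x: "x \<in> Exc n \<pi>"
  then have "x = 1 \<or> x = Suc (x - 1) \<and> x - 1 \<in> DesBot n (cycle_word n \<pi>)"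
    using Exc_minus_1_in_DesBot[OF assms(1) x] by (auto simp: Exc_def)
  then show "x \<in> insert 1 (Suc ` DesBot n (cycle_word n \<pi>))"
    by blast
qed (use Suc_DesBot_in_Exc cycles_1_in_Exc assms in blast)

lemma zero_notin_DesBot:
  assumes "p permutes {1..n}"
  shows "0 \<notin> DesBot n p"
proof
  assume "0 \<in> DesBot n p"
  then obtain i where "2 \<le> i" "i \<le> n" "p i = 0"
    by (auto simp: DesBot_def)
  with permutes_in_image[OF assms, of i] show False
    by simp
qed

lemma insert_1_image_Suc_eq_atLeastAtMost_iff:
  fixes D :: "nat set"
  assumes "0 \<notin> D" "1 \<le> l"
  shows "insert 1 (Suc ` D) = {1..l} \<longleftrightarrow> D = {1..l - 1}"
proof -
  have interval: "{1..l} = insert 1 (Suc ` {1..l - 1})"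
    using assms(2) by auto
  have "1 \<notin> Suc ` D" "1 \<notin> Suc ` {1..l - 1}"
    using assms(1) by auto
  then have "insert 1 (Suc ` D) = {1..l} \<longleftrightarrow> Suc ` D = Suc ` {1..l - 1}"
    unfolding interval by (rule insert_ident)
  also have "\<dots> \<longleftrightarrow> D = {1..l - 1}"
    by (rule inj_image_eq_iff[OF inj_Suc])
  finally show ?thesis .
qed

theorem mainTheorem8:
  fixes n :: nat
  shows "\<exists>F. bij_betw F (cycles (n + 1)) (perms n) \<and>
     (\<forall>\<pi> \<in> cycles (n + 1). \<forall>l \<in> {1..n}.
        Exc n \<pi> = {1..l} \<longleftrightarrow> DesBot n (F \<pi>) = {1..l - 1})"
proof (intro exI conjI ballI)
  show "bij_betw (cycle_word n) (cycles (n + 1)) (perms n)"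
    by (rule cycle_word_bij)
next
  fix \<pi> l
  assume \<pi>: "\<pi> \<in> cycles (n + 1)" and l: "l \<in> {1..n}"
  then have "Exc n \<pi> = insert 1 (Suc ` DesBot n (cycle_word n \<pi>))"
    by (intro Exc_eq_insert_1_Suc_DesBot) auto
  moreover have "0 \<notin> DesBot n (cycle_word n \<pi>)"
    by (rule zero_notin_DesBot[OF cycle_word_permutes[OF \<pi>]])
  ultimately show "Exc n \<pi> = {1..l} \<longleftrightarrow> DesBot n (cycle_word n \<pi>) = {1..l - 1}"
    using insert_1_image_Suc_eq_atLeastAtMost_iff l by simp
qed

end
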